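(* Let $p_1,p_2$ be distinct odd primes. (1) If $n=p_1p_2$, then $\Omega_2(n)\neq\emptyset$. (2) If $n=p_1p_2^2n'$ or $n=2p_1p_2n'$ for some integer $n'\geq 1$, then $\Omega_2(n)=\emptyset$.
   Context: For an integer $n\ge 2$, let $\phi_2(n)=\{k\mid 0\le k\le n-1,\ \gcd(k,n)=2^w\text{ for some }w\ge0\}$, where an integer $k$ is regarded as an element of $\phi_2(n)$ when its residue modulo $n$ (taken in $\{0,\dots,n-1\}$) is, and $\gcd(0,n)=n$. Define $\Omega_2(n)$ to be the set of $i_0\in\mathbb{Z}_n$ such that for every odd integer $i$ with $1\le i\le n$ and $i\notin\phi_2(n)$ (i.e. $\gcd(i,n)$ is not a power of $2$), the element $i_0-i$ is invertible in $\mathbb{Z}_n$. *)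

theory Defs
  imports "HOL-Computational_Algebra.Primes"
begin

text \<open>Residues of Z_n are represented by their canonical representatives 0..n-1 (as nat).\<close>

definition phi2 :: "nat \<Rightarrow> nat set" where
  "phi2 n = {k. k \<le> n - 1 \<and> (\<exists>w::nat. gcd k n = 2 ^ w)}"

text \<open>An integer i is regarded as an element of phi2 n when i mod n is.
  Invertibility of i0 - i in Z_n means coprimality with n.\<close>

definition Omega2 :: "nat \<Rightarrow> nat set" where
  "Omega2 n = {i0. i0 < n \<and>
     (\<forall>i::nat. odd i \<and> 1 \<le> i \<and> i \<le> n \<and> i mod n \<notin> phi2 n
        \<longrightarrow> coprime (int i0 - int i) (int n))}"

end

theory Submission imports Defs "HOL-Number_Theory.Number_Theory" begin

text \<open>For part (1) the residue \<open>i\<^sub>0 = 2p\<^sub>1 + 2p\<^sub>2\<close> works: an odd \<open>i\<close> outside \<open>\<phi>\<^sub>2(p\<^sub>1p\<^sub>2)\<close>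
  is divisible by \<open>p\<^sub>1\<close> or \<open>p\<^sub>2\<close>, and then \<open>i\<^sub>0 - i\<close> is congruent modulo \<open>p\<^sub>1\<close> to \<open>2p\<^sub>2\<close>
  or to \<open>p\<^sub>2(2 - k)\<close> with \<open>k\<close> odd and \<open>1 \<le> k \<le> p\<^sub>1\<close>, neither of which vanishes mod \<open>p\<^sub>1\<close>.
  For part (2), \<open>n\<close> is large enough that for every \<open>i\<^sub>0\<close> some odd multiple \<open>i = p\<^sub>2k\<close>
  with \<open>k < 2p\<^sub>1\<close> is congruent to \<open>i\<^sub>0\<close> modulo \<open>p\<^sub>1\<close>; such an \<open>i\<close> is excluded from
  \<open>\<phi>\<^sub>2(n)\<close> by the odd prime \<open>p\<^sub>2\<close>, and \<open>p\<^sub>1\<close> divides both \<open>i\<^sub>0 - i\<close> and \<open>n\<close>.\<close>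

lemma odd_prime_ge_3: "prime (p::nat) \<Longrightarrow> odd p \<Longrightarrow> p \<ge> 3"
  using prime_ge_2_nat[of p] by presburger

lemma coprime_mod_in_phi2:
  assumes "n > 0" "coprime i n"
  shows "i mod n \<in> phi2 n"
proof -
  have "gcd (i mod n) n = 2 ^ 0"
    using assms(2) by (simp add: gcd.commute gcd_red_nat[symmetric])
  moreover have "i mod n < n" using assms(1) by simp
  then have "i mod n \<le> n - 1" by linarith
  ultimately show ?thesis unfolding phi2_def by blast
qed

lemma odd_prime_common_divisor_not_in_phi2:
  assumes "prime q" "odd q" "q dvd n" "q dvd i"
  shows "i mod n \<notin> phi2 n"
proof
  assume "i mod n \<in> phi2 n"
  then obtain w where "gcd (i mod n) n = 2 ^ w" by (auto simp: phi2_def)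
  moreover have "q dvd gcd (i mod n) n" using assms(3,4) by (simp add: dvd_mod)
  ultimately have "q dvd 2" using assms(1) prime_dvd_power by metis
  then show False using odd_prime_ge_3[OF assms(1,2)] dvd_imp_le[of q 2] by simp
qed

lemma exists_odd_cong_solution:
  fixes a b p :: nat
  assumes "odd p" "coprime a p"
  obtains k where "odd k" "k < 2 * p" "[a * k = b] (mod p)"
proof -
  obtain x where x: "[a * x = 1] (mod p)" using cong_solve_coprime_nat[OF assms(2)] by auto
  define k0 where "k0 = (x * b) mod p"
  define k where "k = (if odd k0 then k0 else k0 + p)"
  have "k0 < p" using assms(1) unfolding k0_def by (simp add: odd_pos)
  then have "odd k" "k < 2 * p" using assms(1) unfolding k_def by auto
  moreover have "[a * k = a * (x * b)] (mod p)"
    unfolding k_def k0_def by (intro cong_scalar_left) (simp add: cong_def)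
  moreover have "[a * (x * b) = 1 * b] (mod p)"
    using cong_scalar_right[OF x] by (simp add: mult.assoc)
  ultimately show ?thesis using that by (auto intro: cong_trans)
qed

lemma Omega2_empty_if_large_multiple:
  fixes p1 p2 n :: nat
  assumes "prime p1" "prime p2" "odd p1" "odd p2" "p1 \<noteq> p2"
    and "p1 * p2 dvd n" "p2 * (2 * p1) \<le> n"
  shows "Omega2 n = {}"
proof (rule ccontr)
  assume "Omega2 n \<noteq> {}"
  then obtain i0 where coprime_shifts: "\<And>i. odd i \<Longrightarrow> 1 \<le> i \<Longrightarrow> i \<le> n \<Longrightarrow> i mod n \<notin> phi2 n
      \<Longrightarrow> coprime (int i0 - int i) (int n)"
    unfolding Omega2_def by blast
  have "coprime p2 p1" using assms(1,2,5) by (simp add: primes_coprime)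
  then obtain k where k: "odd k" "k < 2 * p1" "[p2 * k = i0] (mod p1)"
    using exists_odd_cong_solution assms(3) by metis
  define i where "i = p2 * k"
  have "odd i" using k(1) assms(4) by (simp add: i_def)
  moreover have "1 \<le> i" using \<open>odd i\<close> by (cases i) auto
  moreover have "i \<le> n" using k(2) assms(7) unfolding i_def by (meson less_imp_le mult_le_mono2 order_trans)
  moreover have "i mod n \<notin> phi2 n"
    using odd_prime_common_divisor_not_in_phi2[OF assms(2,4)] assms(6) by (simp add: i_def dvd_mult_right)
  ultimately have "coprime (int i0 - int i) (int n)" by (rule coprime_shifts)
  moreover have "int p1 dvd int i0 - int i"
    using k(3) unfolding i_def by (metis cong_int_iff cong_iff_dvd_diff cong_sym)
  moreover have "int p1 dvd int n" using assms(6) by (simp add: dvd_mult_left)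
  ultimately have "is_unit (int p1)" using coprime_common_divisor by blast
  then show False using assms(1) by simp
qed

lemma prime_not_dvd_shift_diff:
  fixes p q i i0 :: nat
  assumes "prime p" "prime q" "odd p" "p \<noteq> q"
    and "odd i" "i \<le> p * q" "p dvd i \<or> q dvd i" "[i0 = 2 * p + 2 * q] (mod p)"
  shows "\<not> int p dvd int i0 - int i"
proof
  assume shift: "int p dvd int i0 - int i"
  have cong: "int p dvd int i0 - (2 * int p + 2 * int q)"
    using assms(8) by (simp add: cong_int_iff[symmetric] cong_iff_dvd_diff)
  have "int p dvd (int i0 - int i) - (int i0 - (2 * int p + 2 * int q)) - int p * 2"
    using dvd_diff[OF dvd_diff[OF shift cong] dvd_triv_left] .
  then have dvd: "int p dvd 2 * int q - int i" by (simp add: algebra_simps)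
  have "p \<ge> 3" using odd_prime_ge_3 assms(1,3) by blast
  show False
  proof (cases "p dvd i")
    case True
    then have "int p dvd int (2 * q)" using dvd dvd_add[of "int p" "2 * int q - int i" "int i"] by simp
    then have "p dvd 2 * q" by (simp only: of_nat_dvd_iff)
    then have "p dvd 2 \<or> p dvd q" using assms(1) prime_dvd_mult_iff by blast
    then show False
      using \<open>p \<ge> 3\<close> assms(1,2,4) dvd_imp_le[of p 2] primes_dvd_imp_eq by auto
  next
    case False
    with assms(7) obtain k where k: "i = q * k" by blast
    have "odd k" "k \<le> p" using k assms(5,6) prime_gt_0_nat[OF assms(2)] by (auto simp: mult.commute)
    have "coprime (int p) (int q)" using assms(1,2,4) by (simp add: primes_coprime)
    moreover have "int p dvd int q * (2 - int k)" using dvd k by (simp add: algebra_simps)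
    ultimately have "int p dvd 2 - int k" by (simp add: coprime_dvd_mult_right_iff)
    moreover have "2 - int k \<noteq> 0" using \<open>odd k\<close> by presburger
    ultimately have "int p \<le> \<bar>2 - int k\<bar>" using dvd_imp_le_int[of "2 - int k" "int p"] by simp
    then show False using \<open>k \<le> p\<close> \<open>odd k\<close> \<open>p \<ge> 3\<close> by (cases "k = 0") auto
  qed
qed

lemma shift_in_Omega2_prime_product:
  fixes p1 p2 :: nat
  assumes "prime p1" "prime p2" "odd p1" "odd p2" "p1 \<noteq> p2"
  shows "(2 * p1 + 2 * p2) mod (p1 * p2) \<in> Omega2 (p1 * p2)"
proof -
  define i0 where "i0 = (2 * p1 + 2 * p2) mod (p1 * p2)"
  have "p1 * p2 > 0" using assms(1,2) by (simp add: prime_gt_0_nat)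
  have i0_cong: "[i0 = 2 * p1 + 2 * p2] (mod p1)" "[i0 = 2 * p2 + 2 * p1] (mod p2)"
    unfolding i0_def by (simp_all add: cong_def mod_mod_cancel add.commute)
  have "coprime (int i0 - int i) (int (p1 * p2))"
    if i: "odd i" "i \<le> p1 * p2" "i mod (p1 * p2) \<notin> phi2 (p1 * p2)" for i
  proof -
    have "\<not> coprime i (p1 * p2)" using i(3) coprime_mod_in_phi2 \<open>p1 * p2 > 0\<close> by blast
    then have div: "p1 dvd i \<or> p2 dvd i"
      using assms(1,2) prime_imp_coprime coprime_commute by (metis coprime_mult_right_iff)
    have "\<not> int p1 dvd int i0 - int i"
      using prime_not_dvd_shift_diff[OF assms(1,2,3,5) i(1,2) div i0_cong(1)] .
    then have "coprime (int p1) (int i0 - int i)"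
      using assms(1) prime_imp_coprime[of "int p1"] by simp
    moreover have "\<not> int p2 dvd int i0 - int i"
      using prime_not_dvd_shift_diff[OF assms(2,1,4) assms(5)[symmetric] i(1) _ _ i0_cong(2)] i(2) div
      by (simp add: mult.commute disj_commute)
    then have "coprime (int p2) (int i0 - int i)"
      using assms(2) prime_imp_coprime[of "int p2"] by simp
    ultimately show ?thesis by (simp add: coprime_commute)
  qed
  moreover have "i0 < p1 * p2" using \<open>p1 * p2 > 0\<close> by (simp add: i0_def)
  ultimately show ?thesis unfolding Omega2_def i0_def by blast
qed

theorem lemma7p3:
  fixes p1 p2 :: nat
  assumes "prime p1" and "prime p2" and "odd p1" and "odd p2" and "p1 \<noteq> p2"
  shows "Omega2 (p1 * p2) \<noteq> {} \<and>
         (\<forall>n n'::nat. n' \<ge> 1 \<and> (n = p1 * p2^2 * n' \<or> n = 2 * p1 * p2 * n')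
             \<longrightarrow> Omega2 n = {})"
proof (intro conjI allI impI)
  show "Omega2 (p1 * p2) \<noteq> {}" using shift_in_Omega2_prime_product[OF assms] by blast
next
  fix n n' :: nat
  assume n: "n' \<ge> 1 \<and> (n = p1 * p2^2 * n' \<or> n = 2 * p1 * p2 * n')"
  have "p2 \<ge> 3" using odd_prime_ge_3 assms(2,4) by blast
  have "p1 * p2 dvd n" using n by (auto simp: power2_eq_square)
  moreover have "p2 * (2 * p1) \<le> n"
  proof -
    have "p2 * (2 * p1) \<le> p1 * p2 * p2" using \<open>p2 \<ge> 3\<close> by simp
    moreover have "p1 * p2 * p2 \<le> n \<or> p2 * (2 * p1) \<le> n"
      using n by (auto simp: power2_eq_square)
    ultimately show ?thesis by linarith
  qed
  ultimately show "Omega2 n = {}" using Omega2_empty_if_large_multiple[OF assms] by blast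
qed

end
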